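(* For integers $\ell\ge0$ and $a\in\mathbb{C}$ define the polynomial in $s$ \[ P_{\ell}(s,a)=\begin{cases}\dfrac{2^{\ell+1}}{(2\ell+1)!!}s^{2\ell+1}, & a=0,\\[8pt] \Bigl(-\dfrac{2}{a}\Bigr)^{\ell+1}\displaystyle\sum_{k=0}^{\ell}c^{(\ell)}_k a^{-k}s^{\ell-k}, & a\ne0,\end{cases} \] where $c^{(\ell)}_0=1$ and $c^{(\ell)}_k=\frac{1}{2^k k!}\prod_{j=1-k}^{k}(\ell+j)$ for $1\le k\le\ell$. Then for $s\neq0$, \[ \frac{\partial}{\partial s}\Bigl(\frac{1}{2s}\frac{\partial}{\partial s}\Bigr)^{\ell}\bigl\{e^{-as}P_{\ell}(s,a)\bigr\}=2e^{-as}. \]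
   Context: $(2\ell+1)!!=1\cdot3\cdots(2\ell+1)$. The operator $\bigl(\frac{1}{2s}\frac{\partial}{\partial s}\bigr)^{\ell}$ means $\ell$-fold application of $f\mapsto\frac{1}{2s}f'$. *)

theory Defs
  imports "HOL-Analysis.Analysis"
begin

text \<open>Odd double factorial: odd_dfact m = (2m+1)!! = 1 * 3 * ... * (2m+1).\<close>
definition odd_dfact :: "nat \<Rightarrow> nat" where
  "odd_dfact m = (\<Prod>i\<le>m. 2 * i + 1)"

definition cco :: "nat \<Rightarrow> nat \<Rightarrow> complex" where
  "cco l k = (if k = 0 then 1
     else (\<Prod>j\<in>{1 - int k..int k}. of_int (int l + j)) / (2 ^ k * fact k))"

definition Ppoly :: "nat \<Rightarrow> complex \<Rightarrow> complex \<Rightarrow> complex" where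
  "Ppoly l s a = (if a = 0
     then 2 ^ (l + 1) / of_nat (odd_dfact l) * s ^ (2 * l + 1)
     else (- 2 / a) ^ (l + 1) * (\<Sum>k\<le>l. cco l k * inverse a ^ k * s ^ (l - k)))"

definition Dop :: "(complex \<Rightarrow> complex) \<Rightarrow> complex \<Rightarrow> complex" where
  "Dop f = (\<lambda>s. deriv f s / (2 * s))"

end

theory Submission
  imports Defs
begin

(*
  Write G_l(t) = exp(-a t) P_l(t,a). Everything rests on the ladder identity
  G_(l+1)'(t) = 2 t G_l(t): the operator f |-> f'/(2t) lowers the index by one on the
  open set t ~= 0, so l applications turn G_l into G_0, whose derivative is 2 exp(-a t).

  For a = 0 the ladder identity is (2l+3)!! = (2l+1)!! (2l+3). For a ~= 0 and b = 1/a,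
  P_l is (-2/a)^(l+1) times S_l(t) = sum_k c_k^(l) b^k t^(l-k), the homogenised reverse
  Bessel polynomial b^l theta_l(t/b), and the identity becomes S_(l+1) - b S_(l+1)' = t S_l.
  Comparing coefficients, this is c_(k+1)^(l+1) - c_(k+1)^(l) = (l+1-k) c_k^(l+1), which is
  immediate once c_k^(l) is written as the rising factorial (l+1-k)^(2k) / (2^k k!).
*)

lemma cco_eq_pochhammer:
  "cco l k = pochhammer (of_int (int l + 1 - int k)) (2 * k) / (2 ^ k * fact k)"
proof -
  have "(\<Prod>j\<in>{1 - int k..int k}. of_int (int l + j)) =
        (\<Prod>i<2 * k. of_int (int l + 1 - int k) + (of_nat i :: complex))"
    by (rule prod.reindex_bij_witness[of _ "\<lambda>i. int i + 1 - int k" "\<lambda>j. nat (j - 1 + int k)"])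
       auto
  then show ?thesis
    by (simp add: cco_def pochhammer_prod atLeast0LessThan)
qed

lemma cco_Suc_self: "cco l (Suc l) = 0"
  by (simp add: cco_eq_pochhammer pochhammer_0_left)

lemma pochhammer_Suc_Suc_diff:
  fixes x :: "'a :: comm_ring_1"
  shows "pochhammer x (Suc (Suc n)) - pochhammer (x - 1) (Suc (Suc n))
       = of_nat (Suc (Suc n)) * x * pochhammer (x + 1) n"
proof -
  have "pochhammer x (Suc (Suc n)) = x * (pochhammer (x + 1) n * (x + 1 + of_nat n))"
    by (simp only: pochhammer_rec[of x "Suc n"] pochhammer_Suc[of "x + 1" n])
  moreover have "pochhammer (x - 1) (Suc (Suc n)) = (x - 1) * (x * pochhammer (x + 1) n)"
    by (simp only: pochhammer_rec[of "x - 1"] pochhammer_rec[of x] diff_add_cancel)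
  ultimately show ?thesis
    by (simp add: algebra_simps)
qed

lemma cco_Suc_diff:
  "cco (Suc l) (Suc k) - cco l (Suc k) = of_int (int l + 1 - int k) * cco (Suc l) k"
proof -
  define x :: complex where "x = of_int (int l + 1 - int k)"
  have shifts: "of_int (int (Suc l) + 1 - int (Suc k)) = x"
    "of_int (int l + 1 - int (Suc k)) = x - 1" "of_int (int (Suc l) + 1 - int k) = x + 1"
    by (simp_all add: x_def)
  have "cco (Suc l) (Suc k) - cco l (Suc k)
      = (pochhammer x (Suc (Suc (2 * k))) - pochhammer (x - 1) (Suc (Suc (2 * k))))
        / (2 ^ Suc k * fact (Suc k))"
    unfolding cco_eq_pochhammer shifts by (simp add: diff_divide_distrib)
  also have "\<dots> = x * (pochhammer (x + 1) (2 * k) / (2 ^ k * fact k))"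
  proof -
    define m :: complex where "m = of_nat (Suc k)"
    have "m \<noteq> 0"
      unfolding m_def by (rule of_nat_neq_0)
    moreover have "of_nat (Suc (Suc (2 * k))) = 2 * m" "fact (Suc k) = m * fact k"
      by (simp_all add: m_def)
    ultimately show ?thesis
      unfolding pochhammer_Suc_Suc_diff by (simp add: field_simps)
  qed
  also have "\<dots> = x * cco (Suc l) k"
    unfolding cco_eq_pochhammer shifts ..
  finally show ?thesis
    by (simp only: x_def)
qed

definition bessel_sum :: "nat \<Rightarrow> complex \<Rightarrow> complex \<Rightarrow> complex" where
  "bessel_sum n b t = (\<Sum>k\<le>n. cco n k * b ^ k * t ^ (n - k))"

lemma has_field_derivative_bessel_sum:
  "(bessel_sum n b has_field_derivative
     (\<Sum>k\<le>n. cco n k * b ^ k * (of_nat (n - k) * t ^ (n - k - 1)))) (at t)"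
proof -
  have "((\<lambda>x. x ^ m) has_field_derivative of_nat m * t ^ (m - 1)) (at t)" for m
    using DERIV_power[OF DERIV_ident, of m t] by simp
  then show ?thesis
    unfolding bessel_sum_def [abs_def] by (intro DERIV_sum DERIV_cmult)
qed

lemma bessel_sum_Suc_minus_deriv:
  "bessel_sum (Suc n) b t - b * deriv (bessel_sum (Suc n) b) t = t * bessel_sum n b t"
proof -
  let ?term = "\<lambda>c k. c * b ^ Suc k * t ^ (n - k)"
  have lhs: "bessel_sum (Suc n) b t = t ^ Suc n + (\<Sum>k\<le>n. ?term (cco (Suc n) (Suc k)) k)"
    unfolding bessel_sum_def by (subst sum.atMost_Suc_shift) (simp add: cco_def)
  have "b * deriv (bessel_sum (Suc n) b) t
      = (\<Sum>k\<le>Suc n. cco (Suc n) k * b ^ Suc k * (of_nat (Suc n - k) * t ^ (n - k)))"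
    by (simp add: DERIV_imp_deriv[OF has_field_derivative_bessel_sum] sum_distrib_left
        algebra_simps)
  also have "\<dots> = (\<Sum>k\<le>n. ?term (of_int (int n + 1 - int k) * cco (Suc n) k) k)"
    by (simp add: algebra_simps)
  finally have deriv_term: "b * deriv (bessel_sum (Suc n) b) t
      = (\<Sum>k\<le>n. ?term (of_int (int n + 1 - int k) * cco (Suc n) k) k)" .
  have "t * bessel_sum n b t = (\<Sum>k\<le>Suc n. cco n k * b ^ k * t ^ (Suc n - k))"
    by (simp add: bessel_sum_def sum_distrib_left Suc_diff_le algebra_simps cco_Suc_self)
  also have "\<dots> = t ^ Suc n + (\<Sum>k\<le>n. ?term (cco n (Suc k)) k)"
    by (subst sum.atMost_Suc_shift) (simp add: cco_def)
  finally have rhs: "t * bessel_sum n b t = t ^ Suc n + (\<Sum>k\<le>n. ?term (cco n (Suc k)) k)" .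
  have "(\<Sum>k\<le>n. ?term (cco (Suc n) (Suc k)) k)
      - (\<Sum>k\<le>n. ?term (of_int (int n + 1 - int k) * cco (Suc n) k) k)
      = (\<Sum>k\<le>n. ?term (cco n (Suc k)) k)"
    unfolding sum_subtractf[symmetric]
    by (intro sum.cong refl) (simp only: cco_Suc_diff[symmetric], simp add: algebra_simps)
  then show ?thesis
    unfolding lhs deriv_term rhs by (simp add: algebra_simps)
qed

lemma odd_dfact_Suc: "odd_dfact (Suc m) = odd_dfact m * (2 * Suc m + 1)"
  by (simp add: odd_dfact_def algebra_simps)

lemma odd_dfact_neq_0: "odd_dfact m \<noteq> 0"
  by (simp add: odd_dfact_def)

lemma has_field_derivative_Ppoly_Suc_0:
  "((\<lambda>t. Ppoly (Suc l) t 0) has_field_derivative 2 * t * Ppoly l t 0) (at t)"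
proof -
  define D :: complex where "D = of_nat (odd_dfact l)"
  define E :: complex where "E = of_nat (2 * Suc l + 1)"
  define C where "C = 2 ^ (l + 2) / (D * E)"
  have "D \<noteq> 0" "E \<noteq> 0"
    unfolding D_def E_def of_nat_eq_0_iff using odd_dfact_neq_0 by simp_all
  have Ppoly_Suc: "(\<lambda>t. Ppoly (Suc l) t 0) = (\<lambda>t. C * t ^ (2 * Suc l + 1))"
    by (simp add: Ppoly_def odd_dfact_Suc C_def D_def E_def algebra_simps)
  have derivative_value: "C * (E * t ^ (2 * Suc l)) = 2 * t * Ppoly l t 0"
    using \<open>D \<noteq> 0\<close> \<open>E \<noteq> 0\<close> by (simp add: Ppoly_def C_def D_def [symmetric] field_simps)
  have "((\<lambda>t. C * t ^ (2 * Suc l + 1)) has_field_derivative C * (E * t ^ (2 * Suc l))) (at t)"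
    using DERIV_cmult[OF DERIV_power[OF DERIV_ident, of "2 * Suc l + 1" t]] by (simp add: E_def)
  then show ?thesis
    unfolding Ppoly_Suc derivative_value .
qed

lemma Ppoly_eq_bessel_sum:
  "a \<noteq> 0 \<Longrightarrow> Ppoly n t a = (- 2 / a) ^ Suc n * bessel_sum n (inverse a) t"
  by (simp add: Ppoly_def bessel_sum_def)

lemma has_field_derivative_exp_Ppoly_Suc:
  "((\<lambda>t. exp (- a * t) * Ppoly (Suc l) t a) has_field_derivative
     2 * t * (exp (- a * t) * Ppoly l t a)) (at t)"
proof (cases "a = 0")
  case True
  then show ?thesis
    using has_field_derivative_Ppoly_Suc_0[of l t] by simp
next
  case False
  define b where "b = inverse a"
  define S where "S = bessel_sum (Suc l) b"
  have "(S has_field_derivative deriv S t) (at t)"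
    unfolding S_def by (metis DERIV_imp_deriv has_field_derivative_bessel_sum)
  moreover have "((\<lambda>t. exp (- a * t)) has_field_derivative exp (- a * t) * (- a)) (at t)"
    by (auto intro!: derivative_eq_intros)
  ultimately have "((\<lambda>t. exp (- a * t) * ((- 2 / a) ^ Suc (Suc l) * S t)) has_field_derivative
      exp (- a * t) * (- a) * ((- 2 / a) ^ Suc (Suc l) * S t)
      + (- 2 / a) ^ Suc (Suc l) * deriv S t * exp (- a * t)) (at t)"
    by (intro DERIV_mult DERIV_cmult)
  also have "exp (- a * t) * (- a) * ((- 2 / a) ^ Suc (Suc l) * S t)
      + (- 2 / a) ^ Suc (Suc l) * deriv S t * exp (- a * t)
      = 2 * exp (- a * t) * (- 2 / a) ^ Suc l * (S t - b * deriv S t)"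
    using False by (simp add: b_def field_simps)
  also have "S t - b * deriv S t = t * bessel_sum l b t"
    unfolding S_def by (rule bessel_sum_Suc_minus_deriv)
  also have "2 * exp (- a * t) * (- 2 / a) ^ Suc l * (t * bessel_sum l b t)
      = 2 * t * (exp (- a * t) * Ppoly l t a)"
    using False by (simp add: Ppoly_eq_bessel_sum b_def)
  also have "(\<lambda>t. exp (- a * t) * ((- 2 / a) ^ Suc (Suc l) * S t))
      = (\<lambda>t. exp (- a * t) * Ppoly (Suc l) t a)"
    using False by (simp add: Ppoly_eq_bessel_sum S_def b_def)
  finally show ?thesis .
qed

lemma has_field_derivative_exp_Ppoly_0:
  "((\<lambda>t. exp (- a * t) * Ppoly 0 t a) has_field_derivative 2 * exp (- a * t)) (at t)"
proof (cases "a = 0")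
  case True
  then show ?thesis
    by (auto simp: Ppoly_def odd_dfact_def intro!: derivative_eq_intros)
next
  case False
  then show ?thesis
    by (auto simp: Ppoly_def cco_def intro!: derivative_eq_intros)
qed

lemma Dop_exp_Ppoly_Suc:
  "t \<noteq> 0 \<Longrightarrow> Dop (\<lambda>t. exp (- a * t) * Ppoly (Suc l) t a) t = exp (- a * t) * Ppoly l t a"
  unfolding Dop_def DERIV_imp_deriv [OF has_field_derivative_exp_Ppoly_Suc] by simp

lemma funpow_Dop_cong_on_open:
  assumes "open S" and "\<And>x. x \<in> S \<Longrightarrow> f x = g x" and "x \<in> S"
  shows "(Dop ^^ n) f x = (Dop ^^ n) g x"
  using \<open>x \<in> S\<close>
proof (induction n arbitrary: x)
  case 0
  then show ?case
    using assms(2) by simp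
next
  case (Suc n)
  have "eventually (\<lambda>y. (Dop ^^ n) f y = (Dop ^^ n) g y) (nhds x)"
    using eventually_nhds_in_open [OF \<open>open S\<close> Suc.prems] by (rule eventually_mono) (rule Suc.IH)
  then have "deriv ((Dop ^^ n) f) x = deriv ((Dop ^^ n) g) x"
    by (rule deriv_cong_ev [OF _ refl])
  then show ?case
    by (simp add: Dop_def [of "(Dop ^^ n) f"] Dop_def [of "(Dop ^^ n) g"])
qed

lemma funpow_Dop_descend:
  assumes "open S" and "\<And>n t. t \<in> S \<Longrightarrow> Dop (F (Suc n)) t = F n t" and "t \<in> S"
  shows "(Dop ^^ n) (F (m + n)) t = F m t"
  using \<open>t \<in> S\<close>
proof (induction n arbitrary: t)
  case 0
  then show ?case
    by simp
next
  case (Suc n)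
  have "(Dop ^^ Suc n) (F (m + Suc n)) t = (Dop ^^ n) (Dop (F (Suc (m + n)))) t"
    by (simp add: funpow_Suc_right del: funpow.simps)
  also have "\<dots> = (Dop ^^ n) (F (m + n)) t"
    using \<open>open S\<close> assms(2) Suc.prems by (rule funpow_Dop_cong_on_open)
  also have "\<dots> = F m t"
    using Suc.prems by (rule Suc.IH)
  finally show ?case .
qed

theorem mainTheorem7:
  fixes l :: nat and a s :: complex
  assumes "s \<noteq> 0"
  shows "deriv ((Dop ^^ l) (\<lambda>t. exp (- a * t) * Ppoly l t a)) s = 2 * exp (- a * s)"
proof -
  define F where "F n t = exp (- a * t) * Ppoly n t a" for n t
  have open_punctured: "open (- {0 :: complex})"
    by (simp add: open_Compl)
  have "(Dop ^^ l) (F (0 + l)) t = F 0 t" if "t \<in> - {0}" for t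
    by (rule funpow_Dop_descend [OF open_punctured _ that]) (unfold F_def, rule Dop_exp_Ppoly_Suc, simp)
  moreover have "eventually (\<lambda>t. t \<in> - {0}) (nhds s)"
    using assms by (intro eventually_nhds_in_open open_punctured) simp
  ultimately have "eventually (\<lambda>t. (Dop ^^ l) (F l) t = F 0 t) (nhds s)"
    by (auto elim!: eventually_mono)
  then have "deriv ((Dop ^^ l) (F l)) s = deriv (F 0) s"
    by (simp add: deriv_cong_ev)
  also have "\<dots> = 2 * exp (- a * s)"
    unfolding F_def by (rule DERIV_imp_deriv [OF has_field_derivative_exp_Ppoly_0])
  finally show ?thesis
    by (simp add: F_def [abs_def])
qed

end
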